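(* Suppose the $[n, n-k]$-code $C=C_{\Omega}(D, kO)$ has covering radius $\rho(C)=n-\dim(C)-1=k-1$. Let $P\in E(\mathbb{F}_q)\setminus D$ be any rational point on the elliptic curve $E$ (writing $P=(\alpha,\beta)$ when $P\neq O$). Then: 1. Any vector $v\in C_{\Omega}(D, kO-P)\setminus C$ is a deep hole of $C$. 2. If $P=O$, then the syndrome of $v$ is $H(k)v^T=(0,\cdots,0,\sum_{i=1}^{n}\alpha_i^{k/2}v_i,0,\cdots, 0)^T$ if $k$ is even, and $H(k)v^T=(0,\cdots,0,\sum_{i=1}^{n}\alpha_i^{(k-3)/2}\beta_iv_i)^T$ if $k$ is odd. 3. If $P=(\alpha,\beta)\neq O$, then the syndrome of $v$ is $H(k)v^T=b(1,\alpha, \cdots, \alpha^{\lfloor k/2\rfloor}, \beta, \beta\alpha,\cdots, \beta\alpha^{\lfloor (k-3)/2\rfloor})^T$, where $b=\sum_{i=1}^{n}v_i \neq 0.$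
   Context: Let $\mathbb{F}_q$ be a finite field with $q$ elements, $q$ an odd prime power. Let $E$ be the elliptic curve over $\mathbb{F}_q$ given by $y^2=x^3+sx+t$ ($s,t\in\mathbb{F}_q$) together with the point at infinity $O$. Let $D=\{P_i=(\alpha_i,\beta_i)\mid i=1,\dots,n\}\subset E(\mathbb{F}_q)\setminus\{O\}$ be a set of $n$ rational points, and let $k$ be an integer with $2\le k\le n-2$. For a divisor $V$, $\mathcal{L}(V)$ is the Riemann–Roch space of rational functions $f$ with $\mathrm{div}(f)\ge -V$ (together with $0$), and $\Omega(V)$ is the space of Weil differentials $\omega$ with $\mathrm{div}(\omega)\ge V$ (together with $0$). For a divisor $G$ with support disjoint from $D$, the residue code $C_{\Omega}(D,G)$ is the image of $\Omega(G-D)\to\mathbb{F}_q^n$, $\omega\mapsto(\mathrm{res}_{P_1}(\omega),\dots,\mathrm{res}_{P_n}(\omega))$, and the functional code $C_{\mathcal{L}}(D,G)$ is the image of $\mathcal{L}(G)\to\mathbb{F}_q^n$, $f\mapsto(f(P_1),\dots,f(P_n))$; these two codes are dual to each other. Let $C=C_{\Omega}(D,kO)$, whose dual is $C_{\mathcal{L}}(D,kO)$. Since $\mathcal{L}(kO)$ has basis $\{x^iy^j\mid i\ge 0,\ j\in\{0,1\},\ 2i+3j\le k\}$, a parity-check matrix of $C$ is the $k\times n$ matrix $H(k)$ whose $i$-th column is $(1,\alpha_i,\dots,\alpha_i^{\lfloor k/2\rfloor},\beta_i,\alpha_i\beta_i,\dots,\alpha_i^{\lfloor (k-3)/2\rfloor}\beta_i)^T$.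 A deep hole of $C$ is a word $v\in\mathbb{F}_q^n$ whose Hamming distance to $C$ equals the covering radius $\rho(C)=\max_{u\in\mathbb{F}_q^n}\min_{c\in C}d(u,c)$. *)

theory Defs
  imports Main
begin

datatype 'a ecpoint = Inf | Aff 'a 'a

definition on_curve :: "'a::field \<Rightarrow> 'a \<Rightarrow> 'a \<Rightarrow> 'a \<Rightarrow> bool" where
  "on_curve s t x y \<longleftrightarrow> y ^ 2 = x ^ 3 + s * x + t"

text \<open>Exponent pairs (i,j) of the basis x^i y^j of L(mO): j in {0,1}, 2i+3j \<le> m.\<close>
definition mons :: "nat \<Rightarrow> (nat \<times> nat) set" where
  "mons m = {(i, j) \<in> {..m} \<times> {..1}. 2 * i + 3 * j \<le> m}"

definition evL :: "nat \<Rightarrow> (nat \<times> nat \<Rightarrow> 'a::field) \<Rightarrow> 'a \<Rightarrow> 'a \<Rightarrow> 'a" where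
  "evL m c a b = (\<Sum>(i, j)\<in>mons m. c (i, j) * a ^ i * b ^ j)"

text \<open>Functional code C_L(D, kO - P): evaluations at D of functions in L(kO - P).
  For P = O this is L((k-1)O); for affine P it is the subspace of L(kO) vanishing at P.\<close>
definition Lcode_minus :: "nat \<Rightarrow> ('a::field \<times> 'a) list \<Rightarrow> 'a ecpoint \<Rightarrow> 'a list set" where
  "Lcode_minus k D P = (case P of
      Inf \<Rightarrow> {map (\<lambda>(x, y). evL (k - 1) c x y) D | c. True}
    | Aff a b \<Rightarrow> {map (\<lambda>(x, y). evL k c x y) D | c. evL k c a b = 0})"

definition Lcode :: "nat \<Rightarrow> ('a::field \<times> 'a) list \<Rightarrow> 'a list set" where
  "Lcode k D = {map (\<lambda>(x, y). evL k c x y) D | c. True}"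

definition dual_code :: "nat \<Rightarrow> 'a::field list set \<Rightarrow> 'a list set" where
  "dual_code n S = {v. length v = n \<and> (\<forall>w\<in>S. (\<Sum>i<n. v ! i * w ! i) = 0)}"

text \<open>Residue codes C_Omega(D,kO) and C_Omega(D,kO-P), as duals of the functional codes.\<close>
definition Omega_code :: "nat \<Rightarrow> ('a::field \<times> 'a) list \<Rightarrow> 'a list set" where
  "Omega_code k D = dual_code (length D) (Lcode k D)"

definition Omega_code_minus :: "nat \<Rightarrow> ('a::field \<times> 'a) list \<Rightarrow> 'a ecpoint \<Rightarrow> 'a list set" where
  "Omega_code_minus k D P = dual_code (length D) (Lcode_minus k D P)"

definition hamming :: "'a list \<Rightarrow> 'a list \<Rightarrow> nat" where
  "hamming u w = card {i. i < length u \<and> u ! i \<noteq> w ! i}"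

definition dist_code :: "'a list \<Rightarrow> 'a list set \<Rightarrow> nat" where
  "dist_code u C = Min (hamming u ` C)"

definition covering_radius :: "nat \<Rightarrow> 'a list set \<Rightarrow> nat" where
  "covering_radius n C = Max ((\<lambda>u. dist_code u C) ` {u. length u = n})"

definition deep_hole :: "nat \<Rightarrow> 'a list set \<Rightarrow> 'a list \<Rightarrow> bool" where
  "deep_hole n C v \<longleftrightarrow> length v = n \<and> dist_code v C = covering_radius n C"

definition hcol :: "nat \<Rightarrow> 'a::field \<Rightarrow> 'a \<Rightarrow> 'a list" where
  "hcol k a b = map (\<lambda>i. a ^ i) [0..<k div 2 + 1] @ map (\<lambda>i. a ^ i * b) [0..<(k - 1) div 2]"

definition syndrome :: "nat \<Rightarrow> ('a::field \<times> 'a) list \<Rightarrow> 'a list \<Rightarrow> 'a list" where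
  "syndrome k D v = map (\<lambda>r. \<Sum>l<length D. hcol k (fst (D ! l)) (snd (D ! l)) ! r * v ! l) [0..<k]"

end

theory Submission
  imports Defs "HOL-Computational_Algebra.Polynomial"
begin

text \<open>
  A function of L(mO) is A(x) + B(x) y with pole order max(2 deg A, 2 deg B + 3) at O, and its
  norm A^2 - B^2 (x^3 + s x + t) to F(x) has exactly this degree. In odd characteristic the norm
  has a double root at x = a whenever the function vanishes at both (a, b) and (a, -b), so a
  nonzero function of L(mO) has at most m zeros among the rational points. Consequently, for a set
  T of r points, two independent functions of L((r+1)O) vanishing on T would have pole orders r
  and r + 1 and proportional components, which contradicts parity. Counting dimensions, for
  card T < N and Q in T some function of L(NO) vanishes on T - {Q} but not at Q.

  Hence every nonzero word of C_Omega(D, kO - P) has weight at least k - 1. As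
  C = C_Omega(D, kO) is contained in C_Omega(D, kO - P), a word v of C_Omega(D, kO - P) outside C
  has distance at least k - 1 = rho(C) from C, i.e. it is a deep hole. The syndrome entries are
  the pairings of v with the monomials x^i y^j: they vanish for x^i y^j in L((k-1)O) when P = O,
  and for P = (a, b) the function x^i y^j - a^i b^j lies in L(kO - P).
\<close>

lemma of_nat_card_UNIV_eq_0: "of_nat (card (UNIV :: 'a::{finite,ring_1} set)) = (0::'a)"
proof -
  have "(\<Sum>x\<in>UNIV. x) = (\<Sum>x\<in>UNIV. x + (1::'a))"
    by (rule sum.reindex_bij_witness[of _ "\<lambda>x. x + 1" "\<lambda>x. x - 1"]) auto
  then show ?thesis
    by (simp add: sum.distrib)
qed

lemma two_neq_zero_if_odd_card:
  assumes "odd (card (UNIV :: 'a::{finite,field} set))"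
  shows "(2::'a) \<noteq> 0"
proof
  assume two: "(2::'a) = 0"
  obtain n where "card (UNIV :: 'a set) = 2 * n + 1"
    using assms oddE by blast
  then have "of_nat (2 * n + 1) = (0::'a)"
    using of_nat_card_UNIV_eq_0 by metis
  then show False
    using two by simp
qed

section \<open>Pole orders and norms of functions on the curve\<close>

definition cubic :: "'a::field \<Rightarrow> 'a \<Rightarrow> 'a poly" where
  "cubic s t = [:t, s, 0, 1:]"

lemma on_curve_iff_poly_cubic: "on_curve s t x y \<longleftrightarrow> y ^ 2 = poly (cubic s t) x"
  by (simp add: on_curve_def cubic_def algebra_simps power3_eq_cube)

lemma degree_cubic [simp]: "degree (cubic s t) = 3"
  by (simp add: cubic_def)

lemma cubic_neq_0 [simp]: "cubic s t \<noteq> 0"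
  by (simp add: cubic_def)

text \<open>Pole order at O of A(x) + B(x) y, as x and y have poles of orders 2 and 3.\<close>
definition pole_order :: "'a::zero poly \<Rightarrow> 'a poly \<Rightarrow> nat" where
  "pole_order A B = (if B = 0 then 2 * degree A else max (2 * degree A) (2 * degree B + 3))"

lemma pole_order_le_iff:
  "pole_order A B \<le> m \<longleftrightarrow> 2 * degree A \<le> m \<and> (B = 0 \<or> 2 * degree B + 3 \<le> m)"
  by (auto simp: pole_order_def)

text \<open>(A + B y)(A - B y), with y^2 replaced by x^3 + s x + t.\<close>
definition curve_norm :: "'a::field \<Rightarrow> 'a \<Rightarrow> 'a poly \<Rightarrow> 'a poly \<Rightarrow> 'a poly" where
  "curve_norm s t A B = A ^ 2 - B ^ 2 * cubic s t"

lemma poly_curve_norm_eq_0: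
  assumes "on_curve s t x y" "poly A x + poly B x * y = 0"
  shows "poly (curve_norm s t A B) x = 0"
proof -
  have "poly A x = - (poly B x * y)"
    using assms(2) by (simp add: eq_neg_iff_add_eq_0)
  then show ?thesis
    using assms(1) by (simp add: curve_norm_def on_curve_iff_poly_cubic power_mult_distrib)
qed

lemma curve_norm_mult: "curve_norm s t (C * A) (C * B) = C ^ 2 * curve_norm s t A B"
  by (simp add: curve_norm_def algebra_simps power_mult_distrib)

lemma degree_curve_norm:
  assumes "A \<noteq> 0 \<or> B \<noteq> 0"
  shows "curve_norm s t A B \<noteq> 0 \<and> degree (curve_norm s t A B) = pole_order A B"
proof (cases "B = 0")
  case True
  then show ?thesis
    using assms by (simp add: curve_norm_def pole_order_def degree_power_eq)
next
  case False
  have odd: "degree (B ^ 2 * cubic s t) = 2 * degree B + 3"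
    using False by (simp add: degree_mult_eq degree_power_eq)
  have even: "degree (A ^ 2) = 2 * degree A"
    by (cases "A = 0") (simp_all add: degree_power_eq)
  have "2 * degree A \<noteq> 2 * degree B + 3"
    by presburger
  then have "degree (A ^ 2 + - (B ^ 2 * cubic s t)) = max (2 * degree A) (2 * degree B + 3)"
    using odd even degree_add_eq_left[of "- (B ^ 2 * cubic s t)" "A ^ 2"]
      degree_add_eq_right[of "A ^ 2" "- (B ^ 2 * cubic s t)"]
    by (cases "2 * degree A < 2 * degree B + 3") simp_all
  then have "degree (curve_norm s t A B) = max (2 * degree A) (2 * degree B + 3)"
    by (simp add: curve_norm_def)
  then show ?thesis
    using False by (auto simp: pole_order_def)
qed

lemma pole_order_mult:
  fixes A B C :: "'a::field poly"
  assumes "C \<noteq> 0" "A \<noteq> 0 \<or> B \<noteq> 0"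
  shows "pole_order (C * A) (C * B) = 2 * degree C + pole_order A B"
proof -
  have "C * A \<noteq> 0 \<or> C * B \<noteq> 0"
    using assms by auto
  then have "pole_order (C * A) (C * B) = degree (C ^ 2 * curve_norm 0 0 A B)"
    using degree_curve_norm curve_norm_mult by metis
  also have "\<dots> = 2 * degree C + pole_order A B"
    using assms degree_curve_norm[OF assms(2)] by (simp add: degree_mult_eq degree_power_eq)
  finally show ?thesis .
qed

text \<open>If A B' = A' B then (A + B y) / (A' + B' y) lies in the rational function field of x,
  and so has a pole of even order at O.\<close>
lemma even_pole_order_add_if_cross_eq:
  fixes A B A' B' :: "'a::field poly"
  assumes cross: "A * B' = A' * B" and "A \<noteq> 0 \<or> B \<noteq> 0" "A' \<noteq> 0 \<or> B' \<noteq> 0"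
  shows "even (pole_order A B + pole_order A' B')"
proof -
  consider "A \<noteq> 0" "A' \<noteq> 0" | "B \<noteq> 0" "B' \<noteq> 0"
    using assms by (metis mult_eq_0_iff)
  then show ?thesis
  proof cases
    case 1
    have "pole_order (A' * A) (A' * B) = pole_order (A * A') (A * B')"
      using cross by (simp add: mult.commute)
    then show ?thesis
      using 1 assms(2,3) by (simp add: pole_order_mult) presburger
  next
    case 2
    have "pole_order (B' * A) (B' * B) = pole_order (B * A') (B * B')"
      using cross by (simp add: mult.commute)
    then show ?thesis
      using 2 assms(2,3) by (simp add: pole_order_mult) presburger
  qed
qed

section \<open>Counting zeros\<close>

lemma card_le_degree_if_fibres_le_order:
  fixes p :: "'a::idom poly" and T :: "('a \<times> 'b) set"
  assumes "finite T" "p \<noteq> 0" and fibre: "\<And>a. card {q \<in> T. fst q = a} \<le> order a p"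
  shows "card T \<le> degree p"
proof -
  have "card T = (\<Sum>a\<in>fst ` T. card {q \<in> T. fst q = a})"
    using sum.group[of T "fst ` T" fst "\<lambda>_. 1::nat"] assms(1) by simp
  also have "\<dots> \<le> (\<Sum>a\<in>fst ` T. order a p)"
    by (rule sum_mono) (rule fibre)
  also have "\<dots> = (\<Sum>a\<in>fst ` T \<inter> {a. poly p a = 0}. order a p)"
    using assms(1,2) by (intro sum.mono_neutral_right) (auto simp: order_root)
  also have "\<dots> \<le> (\<Sum>a | poly p a = 0. order a p)"
    using assms(2) by (intro sum_mono2) (auto simp: poly_roots_finite)
  also have "\<dots> \<le> degree p"
    by (rule sum_order_le_degree) fact
  finally show ?thesis .
qed

lemma card_curve_fibre_le_order:
  fixes p :: "'a::field poly"
  assumes "p \<noteq> 0" and on: "\<forall>(x, y)\<in>T. on_curve s t x y" and root: "\<forall>(x, y)\<in>T. poly p x = 0"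
    and double: "\<forall>(x, y)\<in>T. (x, - y) \<in> T \<longrightarrow> y \<noteq> 0 \<longrightarrow> [:- x, 1:] ^ 2 dvd p"
  shows "card {q \<in> T. fst q = a} \<le> order a p"
proof (cases "\<exists>b. (a, b) \<in> T")
  case True
  then obtain b where ab: "(a, b) \<in> T" by blast
  have fibre: "{q \<in> T. fst q = a} \<subseteq> {(a, b), (a, - b)}"
  proof
    fix q assume "q \<in> {q \<in> T. fst q = a}"
    then obtain y where q: "q = (a, y)" and "(a, y) \<in> T"
      by (cases q) auto
    then have "y ^ 2 = b ^ 2"
      using on[rule_format, OF \<open>(a, y) \<in> T\<close>] on[rule_format, OF ab]
      by (simp add: on_curve_def)
    then show "q \<in> {(a, b), (a, - b)}"
      by (simp add: q power2_eq_iff)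
  qed
  show ?thesis
  proof (cases "(a, - b) \<in> T \<and> b \<noteq> 0")
    case True
    then have "[:- a, 1:] ^ 2 dvd p"
      using double ab by auto
    then have "2 \<le> order a p"
      using assms(1) order_divides by blast
    moreover have "card {q \<in> T. fst q = a} \<le> 2"
      using card_mono[OF _ fibre] card_insert_le_m1[of 2 "{(a, - b)}" "(a, b)"] by simp
    ultimately show ?thesis by linarith
  next
    case False
    then have "{q \<in> T. fst q = a} \<subseteq> {(a, b)}"
      using fibre by auto
    then have "card {q \<in> T. fst q = a} \<le> 1"
      using card_mono[of "{(a, b)}"] by fastforce
    moreover have "1 \<le> order a p"
      using root ab assms(1) order_root[of p a] by fastforce
    ultimately show ?thesis by linarith
  qed
next
  case False
  then have "{q \<in> T. fst q = a} = {}"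
    by fastforce
  then show ?thesis
    by (metis card.empty zero_le)
qed

lemma card_curve_points_le_degree:
  fixes p :: "'a::field poly"
  assumes "finite T" "p \<noteq> 0" "\<forall>(x, y)\<in>T. on_curve s t x y" "\<forall>(x, y)\<in>T. poly p x = 0"
    "\<forall>(x, y)\<in>T. (x, - y) \<in> T \<longrightarrow> y \<noteq> 0 \<longrightarrow> [:- x, 1:] ^ 2 dvd p"
  shows "card T \<le> degree p"
  using assms by (intro card_le_degree_if_fibres_le_order card_curve_fibre_le_order)

lemma linear_factor_dvd_if_zero_at_opposite_points:
  fixes A B :: "'a::field poly"
  assumes "(2::'a) \<noteq> 0" "y \<noteq> 0" "(x, y) \<in> T" "(x, - y) \<in> T"
    and zero: "\<forall>(x, y)\<in>T. poly A x + poly B x * y = 0"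
  shows "[:- x, 1:] dvd A \<and> [:- x, 1:] dvd B"
proof -
  have "poly A x + poly B x * y = 0" "poly A x + poly B x * - y = 0"
    using zero assms(3,4) by auto
  then have "2 * poly A x = 0"
    by (simp add: algebra_simps)
  then have "poly A x = 0"
    using assms(1) by simp
  moreover have "poly B x = 0"
    using assms(2) \<open>poly A x + poly B x * y = 0\<close> calculation by simp
  ultimately show ?thesis
    by (simp add: poly_eq_0_iff_dvd)
qed

lemma card_zeros_le_pole_order:
  fixes A B :: "'a::field poly"
  assumes two: "(2::'a) \<noteq> 0" and "finite T" and on: "\<forall>(x, y)\<in>T. on_curve s t x y"
    and zero: "\<forall>(x, y)\<in>T. poly A x + poly B x * y = 0" and nonzero: "A \<noteq> 0 \<or> B \<noteq> 0"
  shows "card T \<le> pole_order A B"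
proof -
  have "card T \<le> degree (curve_norm s t A B)"
  proof (rule card_curve_points_le_degree[OF \<open>finite T\<close> _ on])
    show "curve_norm s t A B \<noteq> 0"
      using degree_curve_norm[OF nonzero] by blast
    show "\<forall>(x, y)\<in>T. poly (curve_norm s t A B) x = 0"
    proof clarify
      fix x y assume "(x, y) \<in> T"
      then show "poly (curve_norm s t A B) x = 0"
        using on zero by (intro poly_curve_norm_eq_0) auto
    qed
    show "\<forall>(x, y)\<in>T. (x, - y) \<in> T \<longrightarrow> y \<noteq> 0 \<longrightarrow> [:- x, 1:] ^ 2 dvd curve_norm s t A B"
    proof clarify
      fix x y assume "(x, y) \<in> T" "(x, - y) \<in> T" "y \<noteq> 0"
      then have "[:- x, 1:] dvd A \<and> [:- x, 1:] dvd B"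
        using linear_factor_dvd_if_zero_at_opposite_points[OF two _ _ _ zero] by blast
      then show "[:- x, 1:] ^ 2 dvd curve_norm s t A B"
        unfolding curve_norm_def by (simp add: dvd_diff dvd_mult2 dvd_power_same)
    qed
  qed
  then show ?thesis
    using degree_curve_norm[OF nonzero] by simp
qed

lemma cross_eq_if_common_zeros:
  fixes A B A' B' :: "'a::field poly"
  assumes two: "(2::'a) \<noteq> 0" and "finite T" and on: "\<forall>(x, y)\<in>T. on_curve s t x y"
    and zero: "\<forall>(x, y)\<in>T. poly A x + poly B x * y = 0"
    and zero': "\<forall>(x, y)\<in>T. poly A' x + poly B' x * y = 0"
    and order: "pole_order A B \<le> m" and order': "pole_order A' B' \<le> m + 1" and "m \<le> card T"
  shows "A * B' = A' * B"
proof (rule ccontr)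
  define p where "p = A * B' - A' * B"
  assume "A * B' \<noteq> A' * B"
  then have "p \<noteq> 0" "B \<noteq> 0 \<or> B' \<noteq> 0"
    by (auto simp: p_def)
  have "degree (A * B') < m"
    using order order' degree_mult_le[of A B'] \<open>B \<noteq> 0 \<or> B' \<noteq> 0\<close>
    by (cases "B' = 0") (auto simp: pole_order_le_iff)
  moreover have "degree (A' * B) < m"
    using order order' degree_mult_le[of A' B] \<open>B \<noteq> 0 \<or> B' \<noteq> 0\<close>
    by (cases "B = 0") (auto simp: pole_order_le_iff)
  ultimately have "degree p < card T"
    using \<open>m \<le> card T\<close> degree_diff_less unfolding p_def by fastforce
  moreover have "card T \<le> degree p"
  proof (rule card_curve_points_le_degree[OF \<open>finite T\<close> \<open>p \<noteq> 0\<close> on])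
    show "\<forall>(x, y)\<in>T. poly p x = 0"
    proof clarify
      fix x y assume "(x, y) \<in> T"
      then have "poly A x + poly B x * y = 0" "poly A' x + poly B' x * y = 0"
        using zero zero' by auto
      then have "poly A x = - (poly B x * y)" "poly A' x = - (poly B' x * y)"
        by (simp_all add: eq_neg_iff_add_eq_0)
      then show "poly p x = 0"
        by (simp add: p_def)
    qed
    show "\<forall>(x, y)\<in>T. (x, - y) \<in> T \<longrightarrow> y \<noteq> 0 \<longrightarrow> [:- x, 1:] ^ 2 dvd p"
    proof clarify
      fix x y assume "(x, y) \<in> T" "(x, - y) \<in> T" "y \<noteq> 0"
      then have "[:- x, 1:] dvd A \<and> [:- x, 1:] dvd B" "[:- x, 1:] dvd A' \<and> [:- x, 1:] dvd B'"
        using linear_factor_dvd_if_zero_at_opposite_points[OF two _ _ _ zero]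
          linear_factor_dvd_if_zero_at_opposite_points[OF two _ _ _ zero'] by blast+
      then show "[:- x, 1:] ^ 2 dvd p"
        unfolding p_def power2_eq_square by (meson dvd_diff mult_dvd_mono)
    qed
  qed
  ultimately show False
    by simp
qed

section \<open>The Riemann-Roch spaces L(NO)\<close>

lemma finite_mons: "finite (mons N)"
  by (rule finite_subset[of _ "{..N} \<times> {..1}"]) (auto simp: mons_def)

lemma mons_mono: "M \<le> N \<Longrightarrow> mons M \<subseteq> mons N"
  by (auto simp: mons_def)

lemma card_mons: "1 \<le> N \<Longrightarrow> card (mons N) = N"
proof -
  assume "1 \<le> N"
  have mons: "mons N = (\<lambda>i. (i, 0)) ` {..N div 2} \<union> (\<lambda>i. (i, 1)) ` {..<(N - 1) div 2}"
    unfolding mons_def by (auto simp: image_iff; presburger)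
  have "card (mons N) = card ((\<lambda>i. (i, 0::nat)) ` {..N div 2}) + card ((\<lambda>i. (i, 1::nat)) ` {..<(N - 1) div 2})"
    unfolding mons by (rule card_Un_disjoint) auto
  also have "\<dots> = (N div 2 + 1) + (N - 1) div 2"
    by (simp add: card_image inj_on_def)
  also have "\<dots> = N"
    using \<open>1 \<le> N\<close> by presburger
  finally show ?thesis .
qed

definition mon_of_weight :: "nat \<Rightarrow> nat \<times> nat" where
  "mon_of_weight w = (if even w then (w div 2, 0) else ((w - 3) div 2, 1))"

lemma mon_of_weight_unique: "(i, j) \<in> mons N \<Longrightarrow> 2 * i + 3 * j = w \<Longrightarrow> (i, j) = mon_of_weight w"
  unfolding mons_def mon_of_weight_def by (auto; presburger)

lemma mon_of_weight_mem: "2 \<le> w \<Longrightarrow> w \<le> N \<Longrightarrow> mon_of_weight w \<in> mons N"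
  unfolding mons_def mon_of_weight_def by (auto; presburger)

lemma evL_eq_sum: "evL N c a b = (\<Sum>m\<in>mons N. (a ^ fst m * b ^ snd m) * c m)"
  unfolding evL_def by (intro sum.cong) (auto simp: algebra_simps)

lemma evL_single_coefficient:
  assumes "m0 \<in> mons N"
  shows "evL N (\<lambda>m. if m = m0 then z else 0) a b = a ^ fst m0 * b ^ snd m0 * z"
  using assms by (simp add: evL_eq_sum if_distrib finite_mons cong: if_cong)

lemma evL_diff: "evL N (\<lambda>m. c m - c' m) a b = evL N c a b - evL N c' a b"
  by (simp add: evL_eq_sum algebra_simps sum_subtractf)

lemma evL_extend:
  assumes "M \<le> N"
  shows "evL N (\<lambda>m. if m \<in> mons M then c m else 0) a b = evL M c a b"
  unfolding evL_def
  by (rule sum.mono_neutral_cong_right) (use assms mons_mono finite_mons in auto)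

definition evL_component :: "nat \<Rightarrow> (nat \<times> nat \<Rightarrow> 'a::field) \<Rightarrow> nat \<Rightarrow> 'a poly" where
  "evL_component N c j = (\<Sum>i | (i, j) \<in> mons N. monom (c (i, j)) i)"

lemma finite_mons_row: "finite {i. (i, j) \<in> mons N}"
  by (rule finite_subset[of _ "{..N}"]) (auto simp: mons_def)

lemma coeff_evL_component:
  "coeff (evL_component N c j) i = (if (i, j) \<in> mons N then c (i, j) else 0)"
  unfolding evL_component_def
  by (simp add: coeff_sum coeff_monom finite_mons_row if_distrib cong: if_cong)

lemma evL_eq_poly_components:
  "evL N c a b = poly (evL_component N c 0) a + poly (evL_component N c 1) a * b"
proof -
  have mons: "mons N = (\<lambda>i. (i, 0)) ` {i. (i, 0) \<in> mons N} \<union> (\<lambda>i. (i, 1)) ` {i. (i, 1) \<in> mons N}"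
    by (auto simp: mons_def image_iff)
  have "evL N c a b = (\<Sum>i | (i, 0) \<in> mons N. c (i, 0) * a ^ i) + (\<Sum>i | (i, 1) \<in> mons N. c (i, 1) * a ^ i * b)"
    unfolding evL_def
    by (subst mons, subst sum.union_disjoint) (auto simp: finite_mons_row sum.reindex inj_on_def)
  then show ?thesis
    by (simp add: evL_component_def poly_sum poly_monom sum_distrib_right)
qed

lemma evL_component_degree_bound_iff:
  "2 * degree (evL_component N c j) + 3 * j \<le> M \<or> evL_component N c j = 0
    \<longleftrightarrow> (\<forall>i. (i, j) \<in> mons N \<longrightarrow> M < 2 * i + 3 * j \<longrightarrow> c (i, j) = 0)"
proof
  assume bound: "2 * degree (evL_component N c j) + 3 * j \<le> M \<or> evL_component N c j = 0"
  show "\<forall>i. (i, j) \<in> mons N \<longrightarrow> M < 2 * i + 3 * j \<longrightarrow> c (i, j) = 0"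
  proof (intro allI impI)
    fix i assume "(i, j) \<in> mons N" "M < 2 * i + 3 * j"
    show "c (i, j) = 0"
    proof (rule ccontr)
      assume "c (i, j) \<noteq> 0"
      then have "coeff (evL_component N c j) i \<noteq> 0"
        using \<open>(i, j) \<in> mons N\<close> by (simp add: coeff_evL_component)
      then have "evL_component N c j \<noteq> 0" "i \<le> degree (evL_component N c j)"
        by (force, rule le_degree)
      then show False
        using bound \<open>M < 2 * i + 3 * j\<close> by linarith
    qed
  qed
next
  assume H: "\<forall>i. (i, j) \<in> mons N \<longrightarrow> M < 2 * i + 3 * j \<longrightarrow> c (i, j) = 0"
  show "2 * degree (evL_component N c j) + 3 * j \<le> M \<or> evL_component N c j = 0"
  proof (cases "evL_component N c j = 0")
    case False
    define d where "d = degree (evL_component N c j)"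
    have "coeff (evL_component N c j) d \<noteq> 0"
      using False by (simp add: d_def)
    then have "(d, j) \<in> mons N \<and> c (d, j) \<noteq> 0"
      unfolding coeff_evL_component by (cases "(d, j) \<in> mons N") simp_all
    then have "\<not> M < 2 * d + 3 * j"
      using H by blast
    then show ?thesis
      unfolding d_def by linarith
  qed simp
qed

lemma pole_order_evL_components_le_iff:
  "pole_order (evL_component N c 0) (evL_component N c 1) \<le> M
    \<longleftrightarrow> (\<forall>(i, j)\<in>mons N. M < 2 * i + 3 * j \<longrightarrow> c (i, j) = 0)"
proof -
  have "(\<forall>(i, j)\<in>mons N. M < 2 * i + 3 * j \<longrightarrow> c (i, j) = 0)
      \<longleftrightarrow> (\<forall>j\<in>{0, 1}. \<forall>i. (i, j) \<in> mons N \<longrightarrow> M < 2 * i + 3 * j \<longrightarrow> c (i, j) = 0)"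
    by (auto simp: mons_def le_Suc_eq)
  also have "\<dots> \<longleftrightarrow> pole_order (evL_component N c 0) (evL_component N c 1) \<le> M"
    unfolding pole_order_le_iff evL_component_degree_bound_iff[symmetric]
    by auto
  finally show ?thesis ..
qed

lemma pole_order_evL_components_le: "pole_order (evL_component N c 0) (evL_component N c 1) \<le> N"
  unfolding pole_order_evL_components_le_iff by (auto simp: mons_def)

lemma pole_order_evL_components_le_pred:
  assumes "pole_order (evL_component N c 0) (evL_component N c 1) \<le> w" "c (mon_of_weight w) = 0"
  shows "pole_order (evL_component N c 0) (evL_component N c 1) \<le> w - 1"
  unfolding pole_order_evL_components_le_iff
proof clarify
  fix i j assume ij: "(i, j) \<in> mons N" "w - 1 < 2 * i + 3 * j"
  show "c (i, j) = 0"
  proof (cases "2 * i + 3 * j = w")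
    case True
    then show ?thesis
      using assms(2) mon_of_weight_unique[OF ij(1)] by simp
  next
    case False
    then show ?thesis
      using assms(1) ij unfolding pole_order_evL_components_le_iff by auto
  qed
qed

lemma evL_components_nonzero:
  assumes "m \<in> mons N" "c m \<noteq> 0"
  shows "evL_component N c 0 \<noteq> 0 \<or> evL_component N c 1 \<noteq> 0"
proof -
  have "snd m = 0 \<or> snd m = 1"
    using assms(1) by (auto simp: mons_def)
  moreover have "coeff (evL_component N c (snd m)) (fst m) \<noteq> 0"
    using assms by (simp add: coeff_evL_component)
  ultimately show ?thesis
    by fastforce
qed

section \<open>Interpolation\<close>

lemma homogeneous_system_back_substitution:
  fixes e :: "'i \<Rightarrow> 'a::field"
  assumes "finite I" "i0 \<in> I" "e i0 \<noteq> 0"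
    and reduced: "\<forall>e'\<in>E. (\<Sum>i\<in>I - {i0}. (e' i - e' i0 * e i / e i0) * c i) = 0"
  shows "\<forall>e'\<in>insert e E. (\<Sum>i\<in>I. e' i * (c(i0 := - (\<Sum>i\<in>I - {i0}. e i * c i) / e i0)) i) = 0"
proof
  define c0 where "c0 = - (\<Sum>i\<in>I - {i0}. e i * c i) / e i0"
  have split: "(\<Sum>i\<in>I. f i * (c(i0 := c0)) i) = f i0 * c0 + (\<Sum>i\<in>I - {i0}. f i * c i)" for f
  proof -
    have "(\<Sum>i\<in>I. f i * (c(i0 := c0)) i) = f i0 * c0 + (\<Sum>i\<in>I - {i0}. f i * (c(i0 := c0)) i)"
      using assms(1,2) by (simp add: sum.remove)
    also have "(\<Sum>i\<in>I - {i0}. f i * (c(i0 := c0)) i) = (\<Sum>i\<in>I - {i0}. f i * c i)"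
      by (intro sum.cong) auto
    finally show ?thesis .
  qed
  fix e' assume "e' \<in> insert e E"
  then consider "e' = e" | "e' \<in> E"
    by blast
  then show "(\<Sum>i\<in>I. e' i * (c(i0 := c0)) i) = 0"
  proof cases
    case 1
    then show ?thesis
      unfolding split using assms(3) by (simp add: c0_def)
  next
    case 2
    have "(\<Sum>i\<in>I - {i0}. (e' i - e' i0 * e i / e i0) * c i)
        = (\<Sum>i\<in>I - {i0}. e' i * c i) - e' i0 / e i0 * (\<Sum>i\<in>I - {i0}. e i * c i)"
      by (simp add: algebra_simps sum_subtractf sum_distrib_left)
    then have "(\<Sum>i\<in>I - {i0}. e' i * c i) = e' i0 / e i0 * (\<Sum>i\<in>I - {i0}. e i * c i)"
      using reduced 2 by simp
    then show ?thesis
      unfolding split using assms(3) by (simp add: c0_def field_simps)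
  qed
qed

lemma homogeneous_system_nontrivial_solution:
  fixes E :: "('i \<Rightarrow> 'a::field) set"
  assumes "finite I" "finite E" "card E < card I"
  shows "\<exists>c. (\<exists>i\<in>I. c i \<noteq> 0) \<and> (\<forall>e\<in>E. (\<Sum>i\<in>I. e i * c i) = 0)"
  using assms
proof (induction "card E" arbitrary: E I rule: less_induct)
  case less
  show ?case
  proof (cases "E = {}")
    case True
    then show ?thesis
      using less.prems by (intro exI[of _ "\<lambda>_. 1"]) (auto simp: card_gt_0_iff)
  next
    case False
    then obtain e where e: "e \<in> E" by blast
    define E0 where "E0 = E - {e}"
    have "finite E0" "card E0 < card E" "E = insert e E0"
      using less.prems(2) card_Diff1_less[OF less.prems(2) e] e by (auto simp: E0_def)
    show ?thesis
    proof (cases "\<forall>i\<in>I. e i = 0")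
      case True
      have "card E0 < card I"
        using \<open>card E0 < card E\<close> less.prems(3) by linarith
      then obtain c where "\<exists>i\<in>I. c i \<noteq> 0" "\<forall>e'\<in>E0. (\<Sum>i\<in>I. e' i * c i) = 0"
        using less.hyps[OF \<open>card E0 < card E\<close> less.prems(1) \<open>finite E0\<close>] by blast
      then show ?thesis
        using True \<open>E = insert e E0\<close> by (intro exI[of _ c]) auto
    next
      case False
      then obtain i0 where i0: "i0 \<in> I" "e i0 \<noteq> 0" by blast
      define reduce where "reduce = (\<lambda>e' i. e' i - e' i0 * e i / e i0)"
      have "card (reduce ` E0) \<le> card E0"
        by (rule card_image_le[OF \<open>finite E0\<close>])
      moreover have "card E0 = card E - 1" "card (I - {i0}) = card I - 1"
        using less.prems e i0 by (simp_all add: E0_def)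
      ultimately have "card (reduce ` E0) < card E" "card (reduce ` E0) < card (I - {i0})"
        using \<open>card E0 < card E\<close> less.prems(3) by linarith+
      moreover have "finite (I - {i0})" "finite (reduce ` E0)"
        using less.prems(1) \<open>finite E0\<close> by simp_all
      ultimately obtain c where
        c: "\<exists>i\<in>I - {i0}. c i \<noteq> 0" "\<forall>e'\<in>reduce ` E0. (\<Sum>i\<in>I - {i0}. e' i * c i) = 0"
        using less.hyps by blast
      then have "\<forall>e'\<in>insert e E0. (\<Sum>i\<in>I. e' i * (c(i0 := - (\<Sum>i\<in>I - {i0}. e i * c i) / e i0)) i) = 0"
        using i0 less.prems(1) by (intro homogeneous_system_back_substitution) (auto simp: reduce_def)
      moreover have "\<exists>i\<in>I. (c(i0 := - (\<Sum>i\<in>I - {i0}. e i * c i) / e i0)) i \<noteq> 0"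
        using c(1) by auto
      ultimately show ?thesis
        using \<open>E = insert e E0\<close> by blast
    qed
  qed
qed

lemma no_common_zeros_of_consecutive_pole_orders:
  fixes A B A' B' :: "'a::field poly"
  assumes two: "(2::'a) \<noteq> 0" and "finite T" and on: "\<forall>(x, y)\<in>T. on_curve s t x y"
    and zero: "\<forall>(x, y)\<in>T. poly A x + poly B x * y = 0"
    and zero': "\<forall>(x, y)\<in>T. poly A' x + poly B' x * y = 0"
    and order: "pole_order A B = card T" and order': "pole_order A' B' = card T + 1"
    and "T \<noteq> {}"
  shows False
proof -
  have "0 < card T"
    using \<open>finite T\<close> \<open>T \<noteq> {}\<close> by (simp add: card_gt_0_iff)
  then have "A \<noteq> 0 \<or> B \<noteq> 0" "A' \<noteq> 0 \<or> B' \<noteq> 0"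
    using order order' by (auto simp: pole_order_def)
  moreover have "A * B' = A' * B"
    using order order' by (intro cross_eq_if_common_zeros[OF two \<open>finite T\<close> on zero zero']) auto
  ultimately have "even (pole_order A B + pole_order A' B')"
    by (intro even_pole_order_add_if_cross_eq)
  then show False
    using order order' by simp
qed

lemma evL_vanishing_with_zero_coefficient:
  fixes T :: "('a::field \<times> 'a) set"
  assumes "finite T" "card T + 1 < card (mons N)" "m0 \<in> mons N"
  shows "\<exists>c. (\<exists>m\<in>mons N. c m \<noteq> 0) \<and> (\<forall>(x, y)\<in>T. evL N c x y = 0) \<and> c m0 = 0"
proof -
  define E where "E = insert (\<lambda>m. if m = m0 then 1 else 0) ((\<lambda>(x, y) m. x ^ fst m * y ^ snd m) ` T)"
  have "finite E"
    using assms(1) by (simp add: E_def)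
  moreover have "card E < card (mons N)"
    using card_image_le[OF assms(1), of "\<lambda>(x, y) m. x ^ fst m * y ^ snd m"] assms
    unfolding E_def by (simp add: card_insert_if)
  ultimately obtain c where c: "\<exists>m\<in>mons N. c m \<noteq> 0" "\<forall>e\<in>E. (\<Sum>m\<in>mons N. e m * c m) = 0"
    using homogeneous_system_nontrivial_solution[OF finite_mons] by blast
  have "\<forall>(x, y)\<in>T. evL N c x y = 0"
  proof clarify
    fix x y assume "(x, y) \<in> T"
    then have "(\<lambda>m. x ^ fst m * y ^ snd m) \<in> E"
      by (force simp: E_def)
    then show "evL N c x y = 0"
      using c(2) by (simp add: evL_eq_sum)
  qed
  moreover have "(\<Sum>m\<in>mons N. (if m = m0 then 1 else 0) * c m) = 0"
    using c(2) by (simp add: E_def)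
  then have "c m0 = 0"
    using assms(3) by (simp add: if_distrib if_distribR finite_mons cong: if_cong)
  ultimately show ?thesis
    using c(1) by blast
qed

text \<open>If every function of L((r+1)O) vanishing on T - {Q} also vanished at Q, its subspace
  vanishing on T would have dimension 2 and contain functions of exact pole orders r and r+1.\<close>
lemma evL_separating_function_card_plus_one:
  fixes T :: "('a::field \<times> 'a) set"
  assumes two: "(2::'a) \<noteq> 0" and "finite T" and on: "\<forall>(x, y)\<in>T. on_curve s t x y"
    and Q: "(a, b) \<in> T" and r: "card T = r" "2 \<le> r"
  shows "\<exists>c. evL (r + 1) c a b \<noteq> 0 \<and> (\<forall>(x, y)\<in>T - {(a, b)}. evL (r + 1) c x y = 0)"
proof (rule ccontr)
  assume "\<nexists>c. evL (r + 1) c a b \<noteq> 0 \<and> (\<forall>(x, y)\<in>T - {(a, b)}. evL (r + 1) c x y = 0)"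
  then have at_Q: "evL (r + 1) c a b = 0" if "\<forall>(x, y)\<in>T - {(a, b)}. evL (r + 1) c x y = 0" for c
    using that by blast
  have "card (T - {(a, b)}) + 1 < card (mons (r + 1))"
    using Q r \<open>finite T\<close> by (simp add: card_mons)
  then have exists: "\<exists>c. (\<exists>m\<in>mons (r + 1). c m \<noteq> 0) \<and> (\<forall>(x, y)\<in>T. evL (r + 1) c x y = 0)
      \<and> c (mon_of_weight w) = 0" if "2 \<le> w" "w \<le> r + 1" for w
    using evL_vanishing_with_zero_coefficient[of "T - {(a, b)}" "r + 1" "mon_of_weight w"]
      mon_of_weight_mem[OF that] \<open>finite T\<close> at_Q by blast
  have "2 \<le> r + 1" "r \<le> r + 1"
    using r by simp_all
  obtain c where
    c: "\<exists>m\<in>mons (r + 1). c m \<noteq> 0" "\<forall>(x, y)\<in>T. evL (r + 1) c x y = 0" "c (mon_of_weight (r + 1)) = 0"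
    using exists[OF \<open>2 \<le> r + 1\<close> order_refl] by blast
  obtain c' where
    c': "\<exists>m\<in>mons (r + 1). c' m \<noteq> 0" "\<forall>(x, y)\<in>T. evL (r + 1) c' x y = 0" "c' (mon_of_weight r) = 0"
    using exists[OF r(2) \<open>r \<le> r + 1\<close>] by blast
  define A B A' B' where "A = evL_component (r + 1) c 0" "B = evL_component (r + 1) c 1"
    "A' = evL_component (r + 1) c' 0" "B' = evL_component (r + 1) c' 1"
  have zero: "\<forall>(x, y)\<in>T. poly A x + poly B x * y = 0" "\<forall>(x, y)\<in>T. poly A' x + poly B' x * y = 0"
    using c(2) c'(2) by (simp_all add: A_B_A'_B'_def evL_eq_poly_components)
  have "r \<le> pole_order A B" "r \<le> pole_order A' B'"
    using card_zeros_le_pole_order[OF two \<open>finite T\<close> on] zero c(1) c'(1) r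
    by (auto simp: A_B_A'_B'_def dest: evL_components_nonzero)
  moreover have "pole_order A B \<le> r"
    using pole_order_evL_components_le_pred[of "r + 1" c "r + 1", OF pole_order_evL_components_le c(3)]
    by (simp add: A_B_A'_B'_def)
  moreover have "pole_order A' B' \<le> r + 1"
    unfolding A_B_A'_B'_def by (rule pole_order_evL_components_le)
  moreover have "\<not> pole_order A' B' \<le> r"
    using pole_order_evL_components_le_pred[of "r + 1" c' r] c'(3) \<open>r \<le> pole_order A' B'\<close> r(2)
    unfolding A_B_A'_B'_def by linarith
  ultimately have "pole_order A B = card T" "pole_order A' B' = card T + 1"
    using r(1) by linarith+
  moreover have "T \<noteq> {}"
    using Q by blast
  ultimately show False
    using no_common_zeros_of_consecutive_pole_orders[OF two \<open>finite T\<close> on zero] by blast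
qed

lemma evL_separating_function:
  fixes T :: "('a::field \<times> 'a) set"
  assumes two: "(2::'a) \<noteq> 0" and "finite T" and on: "\<forall>(x, y)\<in>T. on_curve s t x y"
    and Q: "(a, b) \<in> T" and "card T < N"
  shows "\<exists>c. evL N c a b \<noteq> 0 \<and> (\<forall>(x, y)\<in>T - {(a, b)}. evL N c x y = 0)"
proof -
  define r where "r = card T"
  have "\<exists>c. evL (r + 1) c a b \<noteq> 0 \<and> (\<forall>(x, y)\<in>T - {(a, b)}. evL (r + 1) c x y = 0)"
  proof (cases "2 \<le> r")
    case True
    then show ?thesis
      using evL_separating_function_card_plus_one[OF two \<open>finite T\<close> on Q r_def[symmetric]] by blast
  next
    case False
    then have "card T \<le> Suc 0"
      by (simp add: r_def)
    then have "T - {(a, b)} = {}"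
      using Q card_le_Suc0_iff_eq[OF \<open>finite T\<close>] by blast
    moreover have "evL (r + 1) (\<lambda>m. if m = (0, 0) then 1 else 0) a b = 1"
      by (subst evL_single_coefficient) (simp_all add: mons_def)
    ultimately show ?thesis
      by (intro exI[of _ "\<lambda>m. if m = (0, 0) then 1 else 0"]) auto
  qed
  then obtain c where "evL (r + 1) c a b \<noteq> 0" "\<forall>(x, y)\<in>T - {(a, b)}. evL (r + 1) c x y = 0"
    by blast
  moreover have "r + 1 \<le> N"
    using \<open>card T < N\<close> by (simp add: r_def)
  ultimately show ?thesis
    using evL_extend[of "r + 1" N c] by (intro exI[of _ "\<lambda>m. if m \<in> mons (r + 1) then c m else 0"]) simp
qed

section \<open>Minimum distance and deep holes\<close>

lemma Lcode_minus_subset_Lcode: "Lcode_minus k D P \<subseteq> Lcode k D"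
proof (cases P)
  case Inf
  have "map (\<lambda>(x, y). evL (k - 1) c x y) D
      = map (\<lambda>(x, y). evL k (\<lambda>m. if m \<in> mons (k - 1) then c m else 0) x y) D" for c
    by (simp add: evL_extend)
  then show ?thesis
    using Inf by (auto simp: Lcode_minus_def Lcode_def)
next
  case Aff
  then show ?thesis
    by (auto simp: Lcode_minus_def Lcode_def)
qed

lemma dual_code_antimono: "S \<subseteq> S' \<Longrightarrow> dual_code n S' \<subseteq> dual_code n S"
  by (auto simp: dual_code_def)

lemma Omega_code_subset_Omega_code_minus: "Omega_code k D \<subseteq> Omega_code_minus k D P"
  unfolding Omega_code_def Omega_code_minus_def by (intro dual_code_antimono Lcode_minus_subset_Lcode)

lemma evL_codeword_separating:
  assumes "distinct D" "S \<subseteq> {..<length D}" "j \<in> S" "(\<lambda>i. D ! i) ` S \<subseteq> T"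
    and "evL N c (fst (D ! j)) (snd (D ! j)) \<noteq> 0" "\<forall>(x, y)\<in>T - {D ! j}. evL N c x y = 0"
  shows "map (\<lambda>(x, y). evL N c x y) D ! j \<noteq> 0 \<and> (\<forall>i\<in>S - {j}. map (\<lambda>(x, y). evL N c x y) D ! i = 0)"
proof -
  have nth: "map (\<lambda>(x, y). evL N c x y) D ! i = evL N c (fst (D ! i)) (snd (D ! i))" if "i \<in> S" for i
    using that assms(2) by (auto simp: case_prod_beta)
  have "D ! i \<in> T - {D ! j}" if "i \<in> S - {j}" for i
  proof -
    have "i < length D" "j < length D"
      using that assms(2,3) by auto
    then show ?thesis
      using that assms(1,4) by (auto simp: nth_eq_iff_index_eq)
  qed
  then show ?thesis
    using assms(3,5,6) by (auto simp: nth case_prod_beta)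
qed

lemma Lcode_minus_separating:
  fixes D :: "('a::field \<times> 'a) list"
  assumes two: "(2::'a) \<noteq> 0" and "distinct D" and D_on: "\<forall>(x, y)\<in>set D. on_curve s t x y"
    and P_rat: "case P of Inf \<Rightarrow> True | Aff a b \<Rightarrow> on_curve s t a b \<and> (a, b) \<notin> set D"
    and S: "S \<subseteq> {..<length D}" "card S + 2 \<le> k" "j \<in> S"
  shows "\<exists>u\<in>Lcode_minus k D P. u ! j \<noteq> 0 \<and> (\<forall>i\<in>S - {j}. u ! i = 0)"
proof -
  have "finite S"
    using S(1) finite_subset by blast
  have "(\<lambda>i. D ! i) ` S \<subseteq> set D"
    using S(1) by auto
  then have DS_on: "\<forall>(x, y)\<in>(\<lambda>i. D ! i) ` S. on_curve s t x y"
    using D_on by blast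
  obtain xj yj where Dj: "D ! j = (xj, yj)"
    by fastforce
  then have DS_j: "(xj, yj) \<in> (\<lambda>i. D ! i) ` S"
    using S(3) by (metis rev_image_eqI)
  note separating = evL_codeword_separating[OF \<open>distinct D\<close> S(1,3)]
  show ?thesis
  proof (cases P)
    case Inf
    define T where "T = (\<lambda>i. D ! i) ` S"
    have "card T < k - 1"
      using card_image_le[OF \<open>finite S\<close>, of "\<lambda>i. D ! i"] S(2) by (simp add: T_def)
    moreover have "finite T" "\<forall>(x, y)\<in>T. on_curve s t x y" "(xj, yj) \<in> T"
      using \<open>finite S\<close> DS_on DS_j by (simp_all add: T_def)
    ultimately obtain c where c: "evL (k - 1) c xj yj \<noteq> 0" "\<forall>(x, y)\<in>T - {(xj, yj)}. evL (k - 1) c x y = 0"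
      using evL_separating_function[OF two] by blast
    show ?thesis
      using separating[of T "k - 1" c] c Dj Inf by (auto simp: T_def Lcode_minus_def)
  next
    case (Aff a b)
    define T where "T = insert (a, b) ((\<lambda>i. D ! i) ` S)"
    have "card T < k"
      using card_image_le[OF \<open>finite S\<close>, of "\<lambda>i. D ! i"] S(2) \<open>finite S\<close>
      by (simp add: T_def card_insert_if)
    moreover have "finite T" "\<forall>(x, y)\<in>T. on_curve s t x y" "(xj, yj) \<in> T"
      using \<open>finite S\<close> DS_on DS_j P_rat Aff by (simp_all add: T_def)
    ultimately obtain c where c: "evL k c xj yj \<noteq> 0" "\<forall>(x, y)\<in>T - {(xj, yj)}. evL k c x y = 0"
      using evL_separating_function[OF two] by blast
    have "(a, b) \<noteq> (xj, yj)"
      using P_rat Aff Dj S nth_mem[of j D] by force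
    then have "evL k c a b = 0"
      using c(2) by (auto simp: T_def)
    then show ?thesis
      using separating[of T k c] c Dj Aff by (auto simp: T_def Lcode_minus_def)
  qed
qed

lemma Omega_code_minus_min_dist:
  fixes D :: "('a::field \<times> 'a) list"
  assumes two: "(2::'a) \<noteq> 0" and "distinct D" and "\<forall>(x, y)\<in>set D. on_curve s t x y"
    and "case P of Inf \<Rightarrow> True | Aff a b \<Rightarrow> on_curve s t a b \<and> (a, b) \<notin> set D"
    and v: "v \<in> Omega_code_minus k D P" and w: "w \<in> Omega_code_minus k D P" and "v \<noteq> w"
  shows "k - 1 \<le> hamming v w"
proof (rule ccontr)
  define n where "n = length D"
  define S where "S = {i. i < length v \<and> v ! i \<noteq> w ! i}"
  have len: "length v = n" "length w = n"
    using v w by (simp_all add: Omega_code_minus_def dual_code_def n_def)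
  have "\<exists>i<n. v ! i \<noteq> w ! i"
    using \<open>v \<noteq> w\<close> len nth_equalityI[of v w] by auto
  then obtain j where "j \<in> S"
    using len unfolding S_def by auto
  assume "\<not> k - 1 \<le> hamming v w"
  then have "card S + 2 \<le> k"
    by (simp add: hamming_def S_def)
  moreover have "S \<subseteq> {..<length D}"
    using len by (auto simp: S_def n_def)
  ultimately obtain u where u: "u \<in> Lcode_minus k D P" "u ! j \<noteq> 0" "\<forall>i\<in>S - {j}. u ! i = 0"
    using Lcode_minus_separating[OF assms(1-4)] \<open>j \<in> S\<close> by blast
  have "(\<Sum>i<n. (v ! i - w ! i) * u ! i) = (\<Sum>i<n. v ! i * u ! i) - (\<Sum>i<n. w ! i * u ! i)"
    by (simp add: left_diff_distrib sum_subtractf)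
  also have "\<dots> = 0"
    using u(1) v w by (simp add: Omega_code_minus_def dual_code_def n_def)
  finally have "(\<Sum>i<n. (v ! i - w ! i) * u ! i) = 0" .
  moreover have "(\<Sum>i<n. (v ! i - w ! i) * u ! i) = (v ! j - w ! j) * u ! j"
  proof -
    have "j < n"
      using \<open>j \<in> S\<close> len by (simp add: S_def)
    moreover have "(\<Sum>i\<in>{..<n} - {j}. (v ! i - w ! i) * u ! i) = 0"
      using u(3) len by (intro sum.neutral) (auto simp: S_def)
    ultimately show ?thesis
      by (simp add: sum.remove)
  qed
  ultimately show False
    using \<open>j \<in> S\<close> u(2) by (simp add: S_def)
qed

lemma deep_hole_if_dist_ge_covering_radius:
  fixes C :: "'a::finite list set"
  assumes "C \<subseteq> {u. length u = n}" "C \<noteq> {}" "length v = n"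
    and "covering_radius n C \<le> d" "\<forall>c\<in>C. d \<le> hamming v c"
  shows "deep_hole n C v"
proof -
  have "finite {u :: 'a list. length u = n}"
    using finite_lists_length_eq[of "UNIV :: 'a set" n] by simp
  then have "dist_code v C \<le> covering_radius n C"
    unfolding covering_radius_def using assms(3) by (intro Max_ge) auto
  moreover have "d \<le> dist_code v C"
    unfolding dist_code_def using assms \<open>finite {u. length u = n}\<close>
    by (subst Min_ge_iff) (auto intro: finite_subset)
  ultimately show ?thesis
    using assms(3,4) by (simp add: deep_hole_def)
qed

lemma deep_hole_if_Omega_code_minus:
  fixes D :: "('a::{finite,field} \<times> 'a) list"
  assumes two: "(2::'a) \<noteq> 0" and "distinct D" and "\<forall>(x, y)\<in>set D. on_curve s t x y"
    and "case P of Inf \<Rightarrow> True | Aff a b \<Rightarrow> on_curve s t a b \<and> (a, b) \<notin> set D"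
    and rho: "covering_radius (length D) (Omega_code k D) = k - 1"
    and v: "v \<in> Omega_code_minus k D P" "v \<notin> Omega_code k D"
  shows "deep_hole (length D) (Omega_code k D) v"
proof (rule deep_hole_if_dist_ge_covering_radius)
  show "Omega_code k D \<subseteq> {u. length u = length D}"
    by (auto simp: Omega_code_def dual_code_def)
  have "replicate (length D) 0 \<in> Omega_code k D"
    unfolding Omega_code_def dual_code_def by (auto intro!: sum.neutral)
  then show "Omega_code k D \<noteq> {}"
    by blast
  show "length v = length D"
    using v(1) by (simp add: Omega_code_minus_def dual_code_def)
  show "covering_radius (length D) (Omega_code k D) \<le> k - 1"
    using rho by simp
  show "\<forall>c\<in>Omega_code k D. k - 1 \<le> hamming v c"
    using Omega_code_minus_min_dist[OF assms(1-4) v(1)] Omega_code_subset_Omega_code_minus v(2)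
    by blast
qed

section \<open>Syndromes\<close>

definition moment :: "('a::field \<times> 'a) list \<Rightarrow> 'a list \<Rightarrow> nat \<times> nat \<Rightarrow> 'a" where
  "moment D v m = (\<Sum>l<length D. fst (D ! l) ^ fst m * snd (D ! l) ^ snd m * v ! l)"

lemma inner_evL_eq_sum_moments:
  "(\<Sum>l<length D. v ! l * map (\<lambda>(x, y). evL N c x y) D ! l) = (\<Sum>m\<in>mons N. c m * moment D v m)"
proof -
  have "(\<Sum>l<length D. v ! l * map (\<lambda>(x, y). evL N c x y) D ! l)
      = (\<Sum>l<length D. \<Sum>m\<in>mons N. c m * (fst (D ! l) ^ fst m * snd (D ! l) ^ snd m * v ! l))"
    by (intro sum.cong) (simp_all add: case_prod_beta evL_eq_sum sum_distrib_left algebra_simps)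
  also have "\<dots> = (\<Sum>m\<in>mons N. c m * moment D v m)"
    by (subst sum.swap) (simp add: moment_def sum_distrib_left)
  finally show ?thesis .
qed

lemma sum_single_coefficient_moments:
  "m0 \<in> mons N \<Longrightarrow> (\<Sum>m\<in>mons N. (if m = m0 then z else 0) * moment D v m) = z * moment D v m0"
  by (simp add: if_distrib if_distribR finite_mons cong: if_cong)

lemma dual_code_sum_moments_eq_0:
  assumes "v \<in> dual_code (length D) S" "map (\<lambda>(x, y). evL N c x y) D \<in> S"
  shows "(\<Sum>m\<in>mons N. c m * moment D v m) = 0"
proof -
  have "(\<Sum>l<length D. v ! l * map (\<lambda>(x, y). evL N c x y) D ! l) = 0"
    using assms unfolding dual_code_def by blast
  then show ?thesis
    by (simp only: inner_evL_eq_sum_moments)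
qed

lemma Omega_code_if_moments_eq_0:
  assumes "length v = length D" "\<forall>m\<in>mons k. moment D v m = 0"
  shows "v \<in> Omega_code k D"
proof -
  have "(\<Sum>l<length D. v ! l * map (\<lambda>(x, y). evL k c x y) D ! l) = 0" for c
    unfolding inner_evL_eq_sum_moments using assms(2) by simp
  then show ?thesis
    using assms(1) by (auto simp: Omega_code_def dual_code_def Lcode_def simp del: nth_map)
qed

lemma moment_eq_0_if_Omega_code_minus_Inf:
  assumes "v \<in> Omega_code_minus k D Inf" "m \<in> mons (k - 1)"
  shows "moment D v m = 0"
proof -
  have "map (\<lambda>(x, y). evL (k - 1) (\<lambda>m'. if m' = m then 1 else 0) x y) D \<in> Lcode_minus k D Inf"
    by (auto simp: Lcode_minus_def)
  then have "(\<Sum>m'\<in>mons (k - 1). (if m' = m then 1 else 0) * moment D v m') = 0"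
    using assms(1) unfolding Omega_code_minus_def by (rule dual_code_sum_moments_eq_0[rotated])
  then show ?thesis
    by (simp only: sum_single_coefficient_moments[OF assms(2)] mult_1)
qed

text \<open>Pairing v with the function x^i y^j - a^i b^j, which lies in L(kO - P).\<close>
lemma moment_if_Omega_code_minus_Aff:
  assumes "v \<in> Omega_code_minus k D (Aff a b)" "m \<in> mons k"
  shows "moment D v m = a ^ fst m * b ^ snd m * moment D v (0, 0)"
proof -
  define z where "z = a ^ fst m * b ^ snd m"
  define c where "c = (\<lambda>m'. (if m' = m then 1 else 0) - (if m' = (0, 0) then z else 0))"
  have "(0, 0) \<in> mons k"
    by (simp add: mons_def)
  then have "evL k c a b = 0"
    unfolding c_def evL_diff using assms(2) by (simp add: evL_single_coefficient z_def)
  then have "map (\<lambda>(x, y). evL k c x y) D \<in> Lcode_minus k D (Aff a b)"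
    by (auto simp: Lcode_minus_def)
  then have "(\<Sum>m'\<in>mons k. c m' * moment D v m') = 0"
    using assms(1) dual_code_sum_moments_eq_0 unfolding Omega_code_minus_def by blast
  moreover have "(\<Sum>m'\<in>mons k. c m' * moment D v m') = moment D v m - z * moment D v (0, 0)"
    unfolding c_def left_diff_distrib sum_subtractf
    using assms(2) \<open>(0, 0) \<in> mons k\<close> by (simp only: sum_single_coefficient_moments) simp
  ultimately show ?thesis
    by (simp add: z_def)
qed

lemma moment_0_0 [simp]: "moment D v (0, 0) = (\<Sum>i<length D. v ! i)"
  by (simp add: moment_def)

lemma moment_0_0_neq_0_if_not_Omega_code_Aff:
  assumes "v \<in> Omega_code_minus k D (Aff a b)" "v \<notin> Omega_code k D"
  shows "moment D v (0, 0) \<noteq> 0"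
proof
  assume "moment D v (0, 0) = 0"
  then have "\<forall>m\<in>mons k. moment D v m = 0"
    using moment_if_Omega_code_minus_Aff[OF assms(1)] by simp
  moreover have "length v = length D"
    using assms(1) by (simp add: Omega_code_minus_def dual_code_def)
  ultimately show False
    using assms(2) Omega_code_if_moments_eq_0 by blast
qed

text \<open>The monomial x^i y^j whose values form row r of H(k).\<close>
definition row_mon :: "nat \<Rightarrow> nat \<Rightarrow> nat \<times> nat" where
  "row_mon k r = (if r \<le> k div 2 then (r, 0) else (r - (k div 2 + 1), 1))"

lemma length_hcol: "1 \<le> k \<Longrightarrow> length (hcol k a b) = k"
  unfolding hcol_def by simp

lemma hcol_nth: "r < k \<Longrightarrow> hcol k a b ! r = a ^ fst (row_mon k r) * b ^ snd (row_mon k r)"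
  unfolding hcol_def row_mon_def by (cases "r \<le> k div 2") (auto simp: nth_append)

lemma length_syndrome: "length (syndrome k D v) = k"
  by (simp add: syndrome_def)

lemma syndrome_nth: "r < k \<Longrightarrow> syndrome k D v ! r = moment D v (row_mon k r)"
  by (simp add: syndrome_def hcol_nth moment_def)

lemma row_mon_mem: "r < k \<Longrightarrow> row_mon k r \<in> mons k"
  unfolding row_mon_def mons_def by auto

lemma row_mon_mem_mons_pred:
  "r < k \<Longrightarrow> r \<noteq> (if even k then k div 2 else k - 1) \<Longrightarrow> row_mon k r \<in> mons (k - 1)"
  unfolding row_mon_def mons_def by (auto; presburger)

lemma syndrome_if_Omega_code_minus_Inf_even:
  assumes "v \<in> Omega_code_minus k D Inf" "even k" "2 \<le> k"
  shows "syndrome k D v = replicate (k div 2) 0 @ [moment D v (k div 2, 0)] @ replicate ((k - 1) div 2) 0"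
    (is "_ = ?R")
proof (rule nth_equalityI)
  show "length (syndrome k D v) = length ?R"
    using assms(2,3) by (simp add: length_syndrome)
  fix r assume "r < length (syndrome k D v)"
  then have "r < k"
    by (simp add: length_syndrome)
  show "syndrome k D v ! r = ?R ! r"
  proof (cases "r = k div 2")
    case True
    then show ?thesis
      using \<open>r < k\<close> by (simp add: syndrome_nth row_mon_def nth_append)
  next
    case False
    then have "syndrome k D v ! r = 0"
      using \<open>r < k\<close> assms(1,2) row_mon_mem_mons_pred
      by (simp add: syndrome_nth moment_eq_0_if_Omega_code_minus_Inf)
    then show ?thesis
      using False \<open>r < k\<close> by (simp add: nth_append nth_Cons')
  qed
qed

lemma syndrome_if_Omega_code_minus_Inf_odd:
  assumes "v \<in> Omega_code_minus k D Inf" "odd k" "2 \<le> k"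
  shows "syndrome k D v = replicate (k - 1) 0 @ [moment D v ((k - 3) div 2, 1)]" (is "_ = ?R")
proof (rule nth_equalityI)
  show "length (syndrome k D v) = length ?R"
    using assms(3) by (simp add: length_syndrome)
  fix r assume "r < length (syndrome k D v)"
  then have "r < k"
    by (simp add: length_syndrome)
  show "syndrome k D v ! r = ?R ! r"
  proof (cases "r = k - 1")
    case True
    have "row_mon k (k - 1) = ((k - 3) div 2, 1)"
      using assms(2,3) unfolding row_mon_def by (auto; presburger)
    then show ?thesis
      using True \<open>r < k\<close> by (simp add: syndrome_nth nth_append)
  next
    case False
    then have "syndrome k D v ! r = 0"
      using \<open>r < k\<close> assms(1,2) row_mon_mem_mons_pred
      by (simp add: syndrome_nth moment_eq_0_if_Omega_code_minus_Inf)
    then show ?thesis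
      using False \<open>r < k\<close> by (simp add: nth_append)
  qed
qed

lemma syndrome_if_Omega_code_minus_Aff:
  assumes "v \<in> Omega_code_minus k D (Aff a b)" "1 \<le> k"
  shows "syndrome k D v = map (\<lambda>z. moment D v (0, 0) * z) (hcol k a b)" (is "_ = ?R")
proof (rule nth_equalityI)
  show "length (syndrome k D v) = length ?R"
    using assms(2) by (simp add: length_syndrome length_hcol)
  fix r assume "r < length (syndrome k D v)"
  then have "r < k"
    by (simp add: length_syndrome)
  then show "syndrome k D v ! r = ?R ! r"
    using assms moment_if_Omega_code_minus_Aff[OF assms(1) row_mon_mem]
    by (simp add: syndrome_nth length_hcol hcol_nth mult.commute)
qed

theorem theorem3p6:
  fixes s t :: "'a::{finite,field}"
    and D :: "('a \<times> 'a) list"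
    and k :: nat
    and P :: "'a ecpoint"
    and v :: "'a list"
  assumes q_odd: "odd (card (UNIV :: 'a set))"
    and nonsing: "4 * s ^ 3 + 27 * t ^ 2 \<noteq> 0"
    and D_dist: "distinct D"
    and D_on: "\<forall>(x, y)\<in>set D. on_curve s t x y"
    and k_ge: "2 \<le> k" and k_le: "k \<le> length D - 2"
    and rho: "covering_radius (length D) (Omega_code k D) = k - 1"
    and P_rat: "case P of Inf \<Rightarrow> True | Aff a b \<Rightarrow> on_curve s t a b \<and> (a, b) \<notin> set D"
    and v_in: "v \<in> Omega_code_minus k D P - Omega_code k D"
  shows "deep_hole (length D) (Omega_code k D) v
    \<and> (P = Inf \<longrightarrow>
         (even k \<longrightarrow> syndrome k D v =
            replicate (k div 2) 0 @ [\<Sum>i<length D. fst (D ! i) ^ (k div 2) * v ! i]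
              @ replicate ((k - 1) div 2) 0)
       \<and> (odd k \<longrightarrow> syndrome k D v =
            replicate (k - 1) 0 @ [\<Sum>i<length D. fst (D ! i) ^ ((k - 3) div 2) * snd (D ! i) * v ! i]))
    \<and> (\<forall>a b. P = Aff a b \<longrightarrow>
         (\<Sum>i<length D. v ! i) \<noteq> 0
       \<and> syndrome k D v = map (\<lambda>z. (\<Sum>i<length D. v ! i) * z) (hcol k a b))"
proof -
  have two: "(2::'a) \<noteq> 0"
    by (rule two_neq_zero_if_odd_card[OF q_odd])
  have v: "v \<in> Omega_code_minus k D P" "v \<notin> Omega_code k D"
    using v_in by simp_all
  show ?thesis
  proof (intro conjI allI impI)
    show "deep_hole (length D) (Omega_code k D) v"
      by (rule deep_hole_if_Omega_code_minus[OF two D_dist D_on P_rat rho v])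
  qed (use v k_ge in \<open>auto simp: moment_def syndrome_if_Omega_code_minus_Inf_even
      syndrome_if_Omega_code_minus_Inf_odd syndrome_if_Omega_code_minus_Aff
      dest: moment_0_0_neq_0_if_not_Omega_code_Aff\<close>)
qed

end
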